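(* Let $K,T\subset\mathbb{R}^n$ be convex bodies. (1) If $q=(q_1,\dots,q_m)$ is a closed strong $(K,T)$-Minkowski billiard trajectory with respect to the $K$-supporting hyperplanes $H_1,\dots,H_m$, then $q$ is a closed weak $(K,T)$-Minkowski billiard trajectory fulfilling the weak Minkowski billiard reflection rule with respect to $H_1,\dots,H_m$. (2) If in addition $T$ is strictly convex, and $q=(q_1,\dots,q_m)$ is a closed weak $(K,T)$-Minkowski billiard trajectory fulfilling the weak Minkowski billiard reflection rule with respect to $K$-supporting hyperplanes $H_1,\dots,H_m$, then $q$ is a closed strong $(K,T)$-Minkowski billiard trajectory with respect to $H_1,\dots,H_m$.
   Context: A convex body in $\mathbb{R}^n$ is a compact convex set containing the origin in its interior. For a convex body $T$, $T^\circ=\{x:\langle x,y\rangle\le 1\ \forall y\in T\}$ is its polar body and $\mu_{T^\circ}(x)=\min\{t\ge 0: x\in tT^\circ\}$ is the Minkowski functional of $T^\circ$ (it equals the support function $h_T(x)=\max_{y\in T}\langle x,y\rangle$). For a convex set $C$ and $z\in\partial C$, $N_C(z)=\{v:\langle v,y-z\rangle\le 0\ \forall y\in C\}$ is the outer normal cone. A closed polygonal curve with vertices $q_1,\dots,q_m$ ($m\ge 2$), written $(q_1,\dots,q_m)$, is always assumed to satisfy $q_j\ne q_{j+1}$ and $q_j\notin[q_{j-1},q_{j+1}]$ for all $j$, indices taken mod $m$. Its $\ell_T$-length is $\ell_T(q)=\sum_{j=1}^m\mu_{T^\circ}(q_{j+1}-q_j)$. Weak trajectories: a closed polygonal curve $q=(q_1,\dots,q_m)$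 with vertices on $\partial K$ is a closed weak $(K,T)$-Minkowski billiard trajectory if for each $j$ there is a supporting hyperplane $H_j$ of $K$ through $q_j$ such that $q_j$ minimizes $\bar q\mapsto \mu_{T^\circ}(\bar q-q_{j-1})+\mu_{T^\circ}(q_{j+1}-\bar q)$ over all $\bar q\in H_j$; one says $q$ fulfills the weak Minkowski billiard reflection rule with respect to $H_1,\dots,H_m$. Strong trajectories: a closed polygonal curve $q=(q_1,\dots,q_m)$ with vertices on $\partial K$ is a closed strong $(K,T)$-Minkowski billiard trajectory if there are $p_1,\dots,p_m\in\partial T$ with $q_{j+1}-q_j\in N_T(p_j)$ and $p_{j+1}-p_j\in -N_K(q_{j+1})$ for all $j$ (indices mod $m$); $p=(p_1,\dots,p_m)$ is called a closed dual billiard trajectory in $T$. It is a strong trajectory with respect to the $K$-supporting hyperplanes $H_1,\dots,H_m$ through $q_1,\dots,q_m$ if there are outer unit normal vectors $n_K(q_j)\in N_K(q_j)$ with $n_K(q_j)$ normal to $H_j$ and numbers $\mu_j\ge 0$ such that $p_{j+1}-p_j=-\mu_{j+1}n_K(q_{j+1})$ for all $j$. *)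

theory Defs
  imports "HOL-Analysis.Analysis"
begin

definition convex_body :: "'a::euclidean_space set \<Rightarrow> bool" where
  "convex_body C \<longleftrightarrow> compact C \<and> convex C \<and> 0 \<in> interior C"

definition polar_body :: "'a::euclidean_space set \<Rightarrow> 'a set" where
  "polar_body T = {x. \<forall>y\<in>T. x \<bullet> y \<le> 1}"

definition minkowski_functional :: "'a::euclidean_space set \<Rightarrow> 'a \<Rightarrow> real" where
  "minkowski_functional C x = Inf {t. t \<ge> 0 \<and> x \<in> (\<lambda>y. t *\<^sub>R y) ` C}"

definition muT :: "'a::euclidean_space set \<Rightarrow> 'a \<Rightarrow> real" where
  "muT T x = minkowski_functional (polar_body T) x"

definition normal_cone :: "'a::euclidean_space set \<Rightarrow> 'a \<Rightarrow> 'a set" where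
  "normal_cone C z = {v. \<forall>y\<in>C. v \<bullet> (y - z) \<le> 0}"

definition strictly_convex_set :: "'a::euclidean_space set \<Rightarrow> bool" where
  "strictly_convex_set C \<longleftrightarrow> convex C \<and>
     (\<forall>x\<in>C. \<forall>y\<in>C. x \<noteq> y \<longrightarrow> (\<forall>t. 0 < t \<and> t < 1 \<longrightarrow> (1 - t) *\<^sub>R x + t *\<^sub>R y \<in> interior C))"

definition supporting_hyperplane :: "'a::euclidean_space set \<Rightarrow> 'a set \<Rightarrow> 'a \<Rightarrow> bool" where
  "supporting_hyperplane K H z \<longleftrightarrow>
     (\<exists>u c. u \<noteq> 0 \<and> H = {x. u \<bullet> x = c} \<and> z \<in> H \<and> (\<forall>y\<in>K. u \<bullet> y \<le> c))"

definition closed_polygon :: "(nat \<Rightarrow> 'a::euclidean_space) \<Rightarrow> nat \<Rightarrow> bool" where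
  "closed_polygon q m \<longleftrightarrow> m \<ge> 2 \<and>
     (\<forall>j<m. q j \<noteq> q ((j + 1) mod m) \<and>
            q j \<notin> closed_segment (q ((j + m - 1) mod m)) (q ((j + 1) mod m)))"

definition weak_traj_wrt ::
  "'a::euclidean_space set \<Rightarrow> 'a set \<Rightarrow> (nat \<Rightarrow> 'a) \<Rightarrow> nat \<Rightarrow> (nat \<Rightarrow> 'a set) \<Rightarrow> bool" where
  "weak_traj_wrt K T q m H \<longleftrightarrow> closed_polygon q m \<and>
     (\<forall>j<m. q j \<in> frontier K \<and> supporting_hyperplane K (H j) (q j) \<and>
        (\<forall>qb\<in>H j. muT T (q j - q ((j + m - 1) mod m)) + muT T (q ((j + 1) mod m) - q j)
                 \<le> muT T (qb - q ((j + m - 1) mod m)) + muT T (q ((j + 1) mod m) - qb)))"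

definition strong_traj_wrt ::
  "'a::euclidean_space set \<Rightarrow> 'a set \<Rightarrow> (nat \<Rightarrow> 'a) \<Rightarrow> nat \<Rightarrow> (nat \<Rightarrow> 'a set) \<Rightarrow> bool" where
  "strong_traj_wrt K T q m H \<longleftrightarrow> closed_polygon q m \<and>
     (\<forall>j<m. q j \<in> frontier K \<and> supporting_hyperplane K (H j) (q j)) \<and>
     (\<exists>p nK mu. \<forall>j<m.
        p j \<in> frontier T \<and>
        q ((j + 1) mod m) - q j \<in> normal_cone T (p j) \<and>
        p ((j + 1) mod m) - p j \<in> uminus ` normal_cone K (q ((j + 1) mod m)) \<and>
        nK j \<in> normal_cone K (q j) \<and> norm (nK j) = 1 \<and>
        (\<forall>x\<in>H j. \<forall>y\<in>H j. nK j \<bullet> (x - y) = 0) \<and>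
        mu j \<ge> (0::real) \<and>
        p ((j + 1) mod m) - p j = - (mu ((j + 1) mod m) *\<^sub>R nK ((j + 1) mod m)))"

end

theory Submission
  imports Defs
begin

text \<open>The Minkowski functional of \<open>T\<degree>\<close> is the support function of \<open>T\<close>: it equals
  \<open>\<langle>v, p\<rangle>\<close> for every maximiser \<open>p \<in> T\<close> of \<open>\<langle>v, \<cdot>\<rangle>\<close> and dominates \<open>\<langle>v, y\<rangle>\<close> for all \<open>y \<in> T\<close>.
  Under the strong rule the dual points \<open>p\<^sub>j\<close> are such maximisers for the directions
  \<open>q\<^sub>j\<^sub>+\<^sub>1 - q\<^sub>j\<close>, and \<open>p\<^sub>j\<^sub>-\<^sub>1 - p\<^sub>j\<close> is normal to \<open>H\<^sub>j\<close>; hence the affine function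
  \<open>x \<mapsto> \<langle>x - q\<^sub>j\<^sub>-\<^sub>1, p\<^sub>j\<^sub>-\<^sub>1\<rangle> + \<langle>q\<^sub>j\<^sub>+\<^sub>1 - x, p\<^sub>j\<rangle>\<close> is constant on \<open>H\<^sub>j\<close>, bounds the length
  of the broken path \<open>q\<^sub>j\<^sub>-\<^sub>1 x q\<^sub>j\<^sub>+\<^sub>1\<close> from below and equals it at \<open>x = q\<^sub>j\<close>.
  Conversely, if \<open>T\<close> is strictly convex, maximisers are unique and therefore depend
  continuously on the direction; comparing \<open>q\<^sub>j\<close> with \<open>q\<^sub>j + t w\<close>, \<open>w\<close> parallel to \<open>H\<^sub>j\<close>,
  and letting \<open>t \<rightarrow> 0\<close> shows that the maximisers \<open>p\<^sub>j\<^sub>-\<^sub>1, p\<^sub>j\<close> differ by a normal of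
  \<open>H\<^sub>j\<close>, and testing \<open>x = q\<^sub>j\<^sub>-\<^sub>1\<close> when it lies on \<open>H\<^sub>j\<close> gives that normal the right sign.\<close>

definition support_point :: "'a::euclidean_space set \<Rightarrow> 'a \<Rightarrow> 'a \<Rightarrow> bool" where
  "support_point T v p \<longleftrightarrow> p \<in> T \<and> (\<forall>y\<in>T. v \<bullet> y \<le> v \<bullet> p)"

lemma support_point_iff_normal_cone:
  "support_point T v p \<longleftrightarrow> p \<in> T \<and> v \<in> normal_cone T p"
  unfolding support_point_def normal_cone_def by (simp add: inner_diff_right)

lemma convex_body_closed: "convex_body T \<Longrightarrow> closed T"
  unfolding convex_body_def by (simp add: compact_imp_closed)

lemma support_point_exists:
  fixes T :: "'a::euclidean_space set"
  assumes "convex_body T"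
  shows "\<exists>p. support_point T v p"
proof -
  have "compact T" "T \<noteq> {}"
    using assms interior_subset unfolding convex_body_def by auto
  moreover have "continuous_on T (\<lambda>y. v \<bullet> y)" by (intro continuous_intros)
  ultimately have "\<exists>p\<in>T. \<forall>y\<in>T. v \<bullet> y \<le> v \<bullet> p" by (rule continuous_attains_sup)
  then show ?thesis unfolding support_point_def by blast
qed

lemma support_point_some:
  fixes T :: "'a::euclidean_space set"
  assumes "convex_body T"
  shows "support_point T v (SOME p. support_point T v p)"
  using support_point_exists[OF assms] by (rule someI_ex)

lemma support_point_not_interior:
  fixes T :: "'a::euclidean_space set"
  assumes "v \<noteq> 0" and "p \<in> interior T"
  shows "\<not> support_point T v p"
proof
  assume sp: "support_point T v p"
  obtain e where e: "e > 0" "ball p e \<subseteq> T" using assms(2) mem_interior by blast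
  define y where "y = p + (e / (2 * norm v)) *\<^sub>R v"
  have "dist p y = e / 2" using assms(1) e unfolding y_def dist_norm by simp
  then have "y \<in> T" using e by auto
  moreover have "v \<bullet> y = v \<bullet> p + e / (2 * norm v) * (norm v)\<^sup>2"
    unfolding y_def by (simp add: power2_norm_eq_inner inner_add_right)
  moreover have "e / (2 * norm v) * (norm v)\<^sup>2 > 0" using assms(1) e by simp
  ultimately show False using sp unfolding support_point_def by force
qed

lemma support_point_in_frontier:
  fixes T :: "'a::euclidean_space set"
  assumes "closed T" and "v \<noteq> 0" and "support_point T v p"
  shows "p \<in> frontier T"
  using assms support_point_not_interior[OF assms(2)]
  unfolding frontier_def support_point_def by (auto simp: closure_closed)

lemma muT_eq_inner_support_point:
  fixes T :: "'a::euclidean_space set"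
  assumes cb: "convex_body T" and sp: "support_point T v p"
  shows "muT T v = v \<bullet> p"
proof -
  define S where "S = {t. t \<ge> 0 \<and> v \<in> (\<lambda>y. t *\<^sub>R y) ` polar_body T}"
  have lower: "v \<bullet> p \<le> t" if "t \<in> S" for t
  proof -
    from that obtain z where z: "z \<in> polar_body T" "v = t *\<^sub>R z" and t: "t \<ge> 0"
      unfolding S_def by auto
    have "z \<bullet> p \<le> 1" using z(1) sp unfolding polar_body_def support_point_def by auto
    then have "t * (z \<bullet> p) \<le> t" using t by (metis mult_left_mono mult.right_neutral)
    then show ?thesis using z(2) by simp
  qed
  have int0: "0 \<in> interior T" using cb unfolding convex_body_def by auto
  then have "v \<bullet> p \<ge> 0" using sp interior_subset unfolding support_point_def by force
  moreover have "v \<bullet> p \<in> S"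
  proof (cases "v \<bullet> p = 0")
    case True
    then have "support_point T v 0"
      using sp int0 interior_subset unfolding support_point_def by force
    then have "v = 0" using support_point_not_interior int0 by blast
    moreover have "(0::'a) \<in> polar_body T" unfolding polar_body_def by simp
    ultimately show ?thesis unfolding S_def using True by force
  next
    case False
    with \<open>v \<bullet> p \<ge> 0\<close> have pos: "v \<bullet> p > 0" by simp
    have "(1 / (v \<bullet> p)) *\<^sub>R v \<in> polar_body T"
      using sp pos unfolding polar_body_def support_point_def by (auto simp: divide_simps)
    moreover have "v = (v \<bullet> p) *\<^sub>R ((1 / (v \<bullet> p)) *\<^sub>R v)" using pos by simp
    ultimately show ?thesis unfolding S_def using pos by fastforce
  qed
  ultimately have "Inf S = v \<bullet> p" using cInf_eq_minimum lower by blast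
  then show ?thesis unfolding muT_def minkowski_functional_def S_def by simp
qed

lemma inner_le_muT:
  fixes T :: "'a::euclidean_space set"
  assumes "convex_body T" and "y \<in> T"
  shows "v \<bullet> y \<le> muT T v"
proof -
  obtain p where "support_point T v p" using support_point_exists[OF assms(1)] by blast
  then show ?thesis
    using muT_eq_inner_support_point[OF assms(1)] assms(2) unfolding support_point_def by force
qed

lemma muT_zero:
  fixes T :: "'a::euclidean_space set"
  assumes "convex_body T"
  shows "muT T 0 = 0"
proof -
  obtain p where "support_point T 0 p" using support_point_exists[OF assms] by blast
  then show ?thesis using muT_eq_inner_support_point[OF assms] by simp
qed

lemma support_point_unique:
  fixes T :: "'a::euclidean_space set"
  assumes sc: "strictly_convex_set T" and v: "v \<noteq> 0"
    and p1: "support_point T v p1" and p2: "support_point T v p2"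
  shows "p1 = p2"
proof (rule ccontr)
  assume "p1 \<noteq> p2"
  define z where "z = (1 - 1/2) *\<^sub>R p1 + (1/2::real) *\<^sub>R p2"
  have "p1 \<in> T" "p2 \<in> T" using p1 p2 unfolding support_point_def by simp_all
  with sc \<open>p1 \<noteq> p2\<close> have "z \<in> interior T"
    unfolding strictly_convex_set_def z_def
    by (metis field_sum_of_halves half_gt_zero_iff less_add_same_cancel1 zero_less_one)
  moreover have "v \<bullet> p1 = v \<bullet> p2" using p1 p2 unfolding support_point_def by force
  then have "support_point T v z"
    using p1 \<open>z \<in> interior T\<close> interior_subset
    unfolding support_point_def z_def by (auto simp: inner_add_right)
  ultimately show False using support_point_not_interior[OF v] by blast
qed

lemma support_point_limit:
  fixes T :: "'a::euclidean_space set"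
  assumes "closed T" and sp: "\<And>n. support_point T (v n) (p n)"
    and v: "v \<longlonglongrightarrow> v0" and p: "p \<longlonglongrightarrow> p0"
  shows "support_point T v0 p0"
  unfolding support_point_def
proof (intro conjI ballI)
  show "p0 \<in> T"
    using closed_sequentially[OF assms(1)] sp p unfolding support_point_def by blast
  fix y assume "y \<in> T"
  then show "v0 \<bullet> y \<le> v0 \<bullet> p0"
    using sp unfolding support_point_def
    by (intro LIMSEQ_le[OF tendsto_inner[OF v tendsto_const] tendsto_inner[OF v p]]) auto
qed

lemma orthogonal_to_hyperplane_imp_parallel:
  fixes u d :: "'a::euclidean_space"
  assumes "u \<noteq> 0" and orth: "\<And>w. u \<bullet> w = 0 \<Longrightarrow> w \<bullet> d = 0"
  shows "d = ((d \<bullet> u) / (u \<bullet> u)) *\<^sub>R u"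
proof -
  define w where "w = d - ((d \<bullet> u) / (u \<bullet> u)) *\<^sub>R u"
  have "u \<bullet> w = 0" using assms(1) unfolding w_def by (simp add: inner_diff_right inner_commute)
  then have "w \<bullet> w = w \<bullet> d"
    unfolding w_def by (simp add: inner_diff_right inner_diff_left inner_commute)
  also have "\<dots> = 0" using orth \<open>u \<bullet> w = 0\<close> .
  finally show ?thesis unfolding w_def by simp
qed

text \<open>In the local lemmas below, \<open>a, z, b\<close> stand for \<open>q\<^sub>j\<^sub>-\<^sub>1, q\<^sub>j, q\<^sub>j\<^sub>+\<^sub>1\<close> and
  \<open>P1, P2\<close> for \<open>p\<^sub>j\<^sub>-\<^sub>1, p\<^sub>j\<close>.\<close>

lemma orthogonal_reflection_imp_min:
  fixes T :: "'a::euclidean_space set"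
  assumes cb: "convex_body T"
    and P1: "support_point T (z - a) P1" and P2: "support_point T (b - z) P2"
    and orth: "(x - z) \<bullet> (P1 - P2) = 0"
  shows "muT T (z - a) + muT T (b - z) \<le> muT T (x - a) + muT T (b - x)"
proof -
  have "muT T (z - a) + muT T (b - z) = (z - a) \<bullet> P1 + (b - z) \<bullet> P2"
    using muT_eq_inner_support_point[OF cb P1] muT_eq_inner_support_point[OF cb P2] by simp
  also have "\<dots> = (x - a) \<bullet> P1 + (b - x) \<bullet> P2"
    using orth by (simp add: inner_diff_left inner_diff_right inner_commute algebra_simps)
  also have "\<dots> \<le> muT T (x - a) + muT T (b - x)"
    using P1 P2 inner_le_muT[OF cb] unfolding support_point_def by (simp add: add_mono)
  finally show ?thesis .
qed

lemma min_on_hyperplane_imp_perturbed_inner_nonneg: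
  fixes T :: "'a::euclidean_space set"
  assumes cb: "convex_body T" and t: "t > 0"
    and X: "support_point T (z - a + t *\<^sub>R w) X" and Y: "support_point T (b - z - t *\<^sub>R w) Y"
    and min: "\<And>x. u \<bullet> x = u \<bullet> z \<Longrightarrow>
                muT T (z - a) + muT T (b - z) \<le> muT T (x - a) + muT T (b - x)"
    and uw: "u \<bullet> w = 0"
  shows "w \<bullet> (X - Y) \<ge> 0"
proof -
  have "muT T (z - a) + muT T (b - z) \<le> muT T (z - a + t *\<^sub>R w) + muT T (b - z - t *\<^sub>R w)"
    using min[of "z + t *\<^sub>R w"] uw by (simp add: inner_add_right algebra_simps)
  also have "\<dots> = (z - a + t *\<^sub>R w) \<bullet> X + (b - z - t *\<^sub>R w) \<bullet> Y"
    using muT_eq_inner_support_point[OF cb X] muT_eq_inner_support_point[OF cb Y] by simp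
  also have "\<dots> = (z - a) \<bullet> X + (b - z) \<bullet> Y + t * (w \<bullet> (X - Y))"
    by (simp add: inner_add_left inner_diff_left inner_diff_right right_diff_distrib)
  moreover have "(z - a) \<bullet> X \<le> muT T (z - a)" "(b - z) \<bullet> Y \<le> muT T (b - z)"
    using X Y inner_le_muT[OF cb] unfolding support_point_def by blast+
  ultimately have "0 \<le> t * (w \<bullet> (X - Y))" by linarith
  then show ?thesis using t by (simp add: zero_le_mult_iff)
qed

lemma min_on_hyperplane_imp_inner_nonneg:
  fixes T :: "'a::euclidean_space set"
  assumes cb: "convex_body T" and sc: "strictly_convex_set T"
    and za: "z \<noteq> a" and bz: "b \<noteq> z"
    and P1: "support_point T (z - a) P1" and P2: "support_point T (b - z) P2"
    and min: "\<And>x. u \<bullet> x = u \<bullet> z \<Longrightarrow>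
                muT T (z - a) + muT T (b - z) \<le> muT T (x - a) + muT T (b - x)"
    and uw: "u \<bullet> w = 0"
  shows "w \<bullet> (P1 - P2) \<ge> 0"
proof -
  define t where "t n = 1 / real (Suc n)" for n
  have t0: "t \<longlonglongrightarrow> 0"
    unfolding t_def by (rule LIMSEQ_inverse_real_of_nat[unfolded inverse_eq_divide])
  define X where "X n = (SOME p. support_point T (z - a + t n *\<^sub>R w) p)" for n
  define Y where "Y n = (SOME p. support_point T (b - z - t n *\<^sub>R w) p)" for n
  have X: "support_point T (z - a + t n *\<^sub>R w) (X n)"
    and Y: "support_point T (b - z - t n *\<^sub>R w) (Y n)" for n
    unfolding X_def Y_def using support_point_some[OF cb] by blast+
  have XY: "w \<bullet> (X n - Y n) \<ge> 0" for n
    using min_on_hyperplane_imp_perturbed_inner_nonneg[OF cb _ X[of n] Y[of n], of u] min uw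
    unfolding t_def by simp
  have "seq_compact (T \<times> T)"
    using cb compact_Times compact_imp_seq_compact unfolding convex_body_def by blast
  moreover have "\<forall>n. (X n, Y n) \<in> T \<times> T" using X Y unfolding support_point_def by simp
  ultimately obtain l r where r: "strict_mono r" and lim: "(\<lambda>n. (X (r n), Y (r n))) \<longlonglongrightarrow> l"
    by (rule seq_compactE) (simp add: o_def)
  have tr: "(\<lambda>n. t (r n)) \<longlonglongrightarrow> 0" using LIMSEQ_subseq_LIMSEQ[OF t0 r] by (simp add: o_def)
  have X0: "(\<lambda>n. X (r n)) \<longlonglongrightarrow> fst l" and Y0: "(\<lambda>n. Y (r n)) \<longlonglongrightarrow> snd l"
    using tendsto_fst[OF lim] tendsto_snd[OF lim] by simp_all
  have vX: "(\<lambda>n. z - a + t (r n) *\<^sub>R w) \<longlonglongrightarrow> z - a"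
    using tendsto_add[OF tendsto_const tendsto_scaleR[OF tr tendsto_const], of "z - a" w] by simp
  have vY: "(\<lambda>n. b - z - t (r n) *\<^sub>R w) \<longlonglongrightarrow> b - z"
    using tendsto_diff[OF tendsto_const tendsto_scaleR[OF tr tendsto_const], of "b - z" w] by simp
  have Xr: "support_point T (z - a + t (r n) *\<^sub>R w) (X (r n))"
    and Yr: "support_point T (b - z - t (r n) *\<^sub>R w) (Y (r n))" for n
    using X Y .
  have "fst l = P1"
    using support_point_limit[OF convex_body_closed[OF cb] Xr vX X0]
      support_point_unique[OF sc _ _ P1] za by simp
  have "snd l = P2"
    using support_point_limit[OF convex_body_closed[OF cb] Yr vY Y0]
      support_point_unique[OF sc _ _ P2] bz by simp
  have "(\<lambda>n. w \<bullet> (X (r n) - Y (r n))) \<longlonglongrightarrow> w \<bullet> (P1 - P2)"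
    using tendsto_inner[OF tendsto_const tendsto_diff[OF X0 Y0], of w]
      \<open>fst l = P1\<close> \<open>snd l = P2\<close> by simp
  then show ?thesis by (rule LIMSEQ_le[OF tendsto_const]) (use XY in blast)
qed

lemma triangle_equality_imp_support_points_eq:
  fixes T :: "'a::euclidean_space set"
  assumes cb: "convex_body T" and sc: "strictly_convex_set T"
    and za: "z \<noteq> a" and bz: "b \<noteq> z"
    and P1: "support_point T (z - a) P1" and P2: "support_point T (b - z) P2"
    and le: "muT T (z - a) + muT T (b - z) \<le> muT T (b - a)"
  shows "P1 = P2"
proof -
  obtain P where P: "support_point T (b - a) P" using support_point_exists[OF cb] by blast
  then have PT: "P \<in> T" unfolding support_point_def by simp
  have "muT T (b - a) = (z - a) \<bullet> P + (b - z) \<bullet> P"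
    using muT_eq_inner_support_point[OF cb P] by (simp add: inner_diff_left)
  moreover have "(z - a) \<bullet> P \<le> muT T (z - a)" "(b - z) \<bullet> P \<le> muT T (b - z)"
    using inner_le_muT[OF cb PT] by simp_all
  ultimately have eq: "(z - a) \<bullet> P = muT T (z - a)" "(b - z) \<bullet> P = muT T (b - z)"
    using le by linarith+
  have "support_point T (z - a) P" "support_point T (b - z) P"
    unfolding support_point_def using PT eq inner_le_muT[OF cb] by simp_all
  then show ?thesis
    using support_point_unique[OF sc _ _ P1] support_point_unique[OF sc _ _ P2] za bz by simp
qed

lemma min_on_hyperplane_imp_reflection:
  fixes T :: "'a::euclidean_space set"
  assumes cb: "convex_body T" and sc: "strictly_convex_set T"
    and u: "u \<noteq> 0" and ua: "u \<bullet> a \<le> u \<bullet> z" and za: "z \<noteq> a" and bz: "b \<noteq> z"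
    and P1: "support_point T (z - a) P1" and P2: "support_point T (b - z) P2"
    and min: "\<And>x. u \<bullet> x = u \<bullet> z \<Longrightarrow>
                muT T (z - a) + muT T (b - z) \<le> muT T (x - a) + muT T (b - x)"
  shows "\<exists>l\<ge>0. P1 - P2 = l *\<^sub>R u"
proof -
  define l where "l = ((P1 - P2) \<bullet> u) / (u \<bullet> u)"
  have nonneg: "w \<bullet> (P1 - P2) \<ge> 0" if "u \<bullet> w = 0" for w
    using min_on_hyperplane_imp_inner_nonneg[OF cb sc za bz P1 P2, of u w] min that by blast
  have "w \<bullet> (P1 - P2) = 0" if "u \<bullet> w = 0" for w
    using nonneg[of w] nonneg[of "- w"] that by simp
  then have d: "P1 - P2 = l *\<^sub>R u"
    unfolding l_def by (rule orthogonal_to_hyperplane_imp_parallel[OF u])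
  have "l \<ge> 0"
  proof (rule ccontr)
    assume "\<not> l \<ge> 0"
    have "(z - a) \<bullet> (P1 - P2) \<ge> 0"
      using P1 P2 unfolding support_point_def by (simp add: inner_diff_right)
    then have "l * (u \<bullet> (z - a)) \<ge> 0" using d by (simp add: inner_commute)
    moreover have "u \<bullet> (z - a) \<ge> 0" using ua by (simp add: inner_diff_right)
    ultimately have "u \<bullet> a = u \<bullet> z"
      using \<open>\<not> l \<ge> 0\<close> by (simp add: zero_le_mult_iff inner_diff_right)
    then have "muT T (z - a) + muT T (b - z) \<le> muT T (b - a)"
      using min muT_zero[OF cb] by fastforce
    then have "P1 = P2" by (rule triangle_equality_imp_support_points_eq[OF cb sc za bz P1 P2])
    then have "l = 0" using d u by simp
    then show False using \<open>\<not> l \<ge> 0\<close> by simp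
  qed
  then show ?thesis using d by blast
qed

lemma pred_mod_succ_mod: "(j::nat) < m \<Longrightarrow> ((j + m - 1) mod m + 1) mod m = j"
proof -
  assume j: "j < m"
  have "((j + m - 1) mod m + 1) mod m = (j + m - 1 + 1) mod m" by (rule mod_add_left_eq)
  also have "j + m - 1 + 1 = j + m" using j by simp
  finally show ?thesis using j by simp
qed

lemma succ_mod_pred_mod: "(k::nat) < m \<Longrightarrow> ((k + 1) mod m + m - 1) mod m = k"
proof -
  assume k: "k < m"
  have "(k + 1) mod m + m - 1 = (k + 1) mod m + (m - 1)" using k by linarith
  then have "((k + 1) mod m + m - 1) mod m = (k + 1 + (m - 1)) mod m"
    by (simp only: mod_add_left_eq)
  also have "k + 1 + (m - 1) = k + m" using k by simp
  finally show ?thesis using k by simp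
qed

lemma frontier_support_point:
  fixes T :: "'a::euclidean_space set"
  assumes "closed T" and "p \<in> frontier T" and "v \<in> normal_cone T p"
  shows "support_point T v p"
  using assms frontier_subset_closed unfolding support_point_iff_normal_cone by blast

lemma strong_traj_imp_weak_traj:
  fixes K T :: "'a::euclidean_space set"
  assumes cb: "convex_body T" and st: "strong_traj_wrt K T q m H"
  shows "weak_traj_wrt K T q m H"
proof -
  have cp: "closed_polygon q m"
    and fs: "\<forall>j<m. q j \<in> frontier K \<and> supporting_hyperplane K (H j) (q j)"
    using st unfolding strong_traj_wrt_def by auto
  obtain p nK mu where S: "\<forall>j<m.
        p j \<in> frontier T \<and>
        q ((j + 1) mod m) - q j \<in> normal_cone T (p j) \<and>
        p ((j + 1) mod m) - p j \<in> uminus ` normal_cone K (q ((j + 1) mod m)) \<and>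
        nK j \<in> normal_cone K (q j) \<and> norm (nK j) = 1 \<and>
        (\<forall>x\<in>H j. \<forall>y\<in>H j. nK j \<bullet> (x - y) = 0) \<and>
        mu j \<ge> (0::real) \<and>
        p ((j + 1) mod m) - p j = - (mu ((j + 1) mod m) *\<^sub>R nK ((j + 1) mod m))"
    using st unfolding strong_traj_wrt_def by blast
  have m0: "m > 0" using cp unfolding closed_polygon_def by simp
  have sp: "support_point T (q ((j + 1) mod m) - q j) (p j)" if "j < m" for j
    using S that frontier_support_point[OF convex_body_closed[OF cb]] by blast
  have "muT T (q j - q ((j + m - 1) mod m)) + muT T (q ((j + 1) mod m) - q j)
        \<le> muT T (x - q ((j + m - 1) mod m)) + muT T (q ((j + 1) mod m) - x)"
    if j: "j < m" and x: "x \<in> H j" for j x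
  proof -
    define i where "i = (j + m - 1) mod m"
    have i: "i < m" unfolding i_def using m0 by simp
    have ij: "(i + 1) mod m = j" unfolding i_def using pred_mod_succ_mod[OF j] .
    have Pi: "support_point T (q j - q i) (p i)" using sp[OF i] ij by simp
    have "p j - p i = - (mu j *\<^sub>R nK j)" using S i ij by metis
    then have "p i - p j = mu j *\<^sub>R nK j" by (simp add: algebra_simps)
    moreover have "q j \<in> H j" using fs j unfolding supporting_hyperplane_def by auto
    then have "nK j \<bullet> (x - q j) = 0" using S j x by blast
    ultimately have "(x - q j) \<bullet> (p i - p j) = 0" by (simp add: inner_commute)
    then show ?thesis
      using orthogonal_reflection_imp_min[OF cb Pi sp[OF j]] unfolding i_def by blast
  qed
  then show ?thesis unfolding weak_traj_wrt_def using cp fs by blast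
qed

lemma strong_traj_wrt_intro:
  fixes K T :: "'a::euclidean_space set"
  assumes cb: "convex_body T" and cp: "closed_polygon q m"
    and fs: "\<forall>j<m. q j \<in> frontier K \<and> supporting_hyperplane K (H j) (q j)"
    and uH: "\<And>j. j < m \<Longrightarrow>
      u j \<noteq> 0 \<and> H j = {x. u j \<bullet> x = u j \<bullet> q j} \<and> (\<forall>y\<in>K. u j \<bullet> y \<le> u j \<bullet> q j)"
    and P: "\<And>j. support_point T (q ((j + 1) mod m) - q j) (P j)"
    and L: "\<And>k. k < m \<Longrightarrow> L k \<ge> 0 \<and> P ((k + m - 1) mod m) - P k = L k *\<^sub>R u k"
  shows "strong_traj_wrt K T q m H"
proof -
  have m0: "m > 0" using cp unfolding closed_polygon_def by simp
  have u_normal: "a *\<^sub>R u j \<in> normal_cone K (q j)" if "j < m" "a \<ge> 0" for j a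
    using uH[OF that(1)] that(2) unfolding normal_cone_def
    by (auto simp: inner_diff_right mult_left_mono)
  define nK where "nK j = (1 / norm (u j)) *\<^sub>R u j" for j
  define mu where "mu j = L j * norm (u j)" for j
  have "\<forall>j<m.
        P j \<in> frontier T \<and>
        q ((j + 1) mod m) - q j \<in> normal_cone T (P j) \<and>
        P ((j + 1) mod m) - P j \<in> uminus ` normal_cone K (q ((j + 1) mod m)) \<and>
        nK j \<in> normal_cone K (q j) \<and> norm (nK j) = 1 \<and>
        (\<forall>x\<in>H j. \<forall>y\<in>H j. nK j \<bullet> (x - y) = 0) \<and>
        mu j \<ge> (0::real) \<and>
        P ((j + 1) mod m) - P j = - (mu ((j + 1) mod m) *\<^sub>R nK ((j + 1) mod m))"
  proof (intro allI impI conjI)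
    fix j assume j: "j < m"
    define k where "k = (j + 1) mod m"
    have k: "k < m" unfolding k_def using m0 by simp
    have Lk: "L k \<ge> 0" "P j - P k = L k *\<^sub>R u k"
      using L[OF k] succ_mod_pred_mod[OF j] unfolding k_def by auto
    have uj: "u j \<noteq> 0" "H j = {x. u j \<bullet> x = u j \<bullet> q j}" using uH[OF j] by auto
    have muk: "mu k *\<^sub>R nK k = L k *\<^sub>R u k" unfolding mu_def nK_def using uH[OF k] by simp
    have "q ((j + 1) mod m) - q j \<noteq> 0" using cp j unfolding closed_polygon_def by auto
    then show "P j \<in> frontier T"
      using support_point_in_frontier[OF convex_body_closed[OF cb] _ P] by simp
    show "q ((j + 1) mod m) - q j \<in> normal_cone T (P j)"
      using P[of j] unfolding support_point_iff_normal_cone by simp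
    show "P ((j + 1) mod m) - P j = - (mu ((j + 1) mod m) *\<^sub>R nK ((j + 1) mod m))"
      using Lk(2) muk unfolding k_def[symmetric] by (simp add: algebra_simps)
    then show "P ((j + 1) mod m) - P j \<in> uminus ` normal_cone K (q ((j + 1) mod m))"
      using u_normal[OF k Lk(1)] muk unfolding k_def[symmetric] by auto
    show "nK j \<in> normal_cone K (q j)" unfolding nK_def using u_normal[OF j] by simp
    show "norm (nK j) = 1" unfolding nK_def using uj by simp
    show "\<forall>x\<in>H j. \<forall>y\<in>H j. nK j \<bullet> (x - y) = 0"
      unfolding nK_def uj(2) by (simp add: inner_diff_right)
    show "mu j \<ge> 0" unfolding mu_def using L[OF j] by simp
  qed
  then show ?thesis unfolding strong_traj_wrt_def using cp fs by blast
qed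

lemma weak_traj_imp_strong_traj:
  fixes K T :: "'a::euclidean_space set"
  assumes cbK: "convex_body K" and cb: "convex_body T" and sc: "strictly_convex_set T"
    and wt: "weak_traj_wrt K T q m H"
  shows "strong_traj_wrt K T q m H"
proof -
  have cp: "closed_polygon q m"
    and fs: "\<forall>j<m. q j \<in> frontier K \<and> supporting_hyperplane K (H j) (q j)"
    and W: "\<forall>j<m. \<forall>x\<in>H j.
              muT T (q j - q ((j + m - 1) mod m)) + muT T (q ((j + 1) mod m) - q j)
              \<le> muT T (x - q ((j + m - 1) mod m)) + muT T (q ((j + 1) mod m) - x)"
    using wt unfolding weak_traj_wrt_def by auto
  have m0: "m > 0" using cp unfolding closed_polygon_def by simp
  have edge: "q ((j + 1) mod m) \<noteq> q j" if "j < m" for j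
    using cp that unfolding closed_polygon_def by auto
  have qK: "q j \<in> K" if "j < m" for j
    using fs that frontier_subset_closed[OF convex_body_closed[OF cbK]] by blast
  have "\<forall>j. \<exists>u. j < m \<longrightarrow>
      u \<noteq> 0 \<and> H j = {x. u \<bullet> x = u \<bullet> q j} \<and> (\<forall>y\<in>K. u \<bullet> y \<le> u \<bullet> q j)"
    using fs unfolding supporting_hyperplane_def by fastforce
  then obtain u where uH: "\<And>j. j < m \<Longrightarrow>
      u j \<noteq> 0 \<and> H j = {x. u j \<bullet> x = u j \<bullet> q j} \<and> (\<forall>y\<in>K. u j \<bullet> y \<le> u j \<bullet> q j)"
    by metis
  define P where "P j = (SOME p. support_point T (q ((j + 1) mod m) - q j) p)" for j
  have P: "support_point T (q ((j + 1) mod m) - q j) (P j)" for j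
    unfolding P_def by (rule support_point_some[OF cb])
  have "\<exists>l\<ge>0. P ((k + m - 1) mod m) - P k = l *\<^sub>R u k" if k: "k < m" for k
  proof -
    define i where "i = (k + m - 1) mod m"
    have i: "i < m" unfolding i_def using m0 by simp
    have ik: "(i + 1) mod m = k" unfolding i_def using pred_mod_succ_mod[OF k] .
    have "u k \<bullet> q i \<le> u k \<bullet> q k" using uH[OF k] qK[OF i] by auto
    moreover have "q k \<noteq> q i" using edge[OF i] ik by simp
    moreover have "support_point T (q k - q i) (P i)" using P[of i] ik by simp
    moreover have "muT T (q k - q i) + muT T (q ((k + 1) mod m) - q k)
        \<le> muT T (x - q i) + muT T (q ((k + 1) mod m) - x)" if "u k \<bullet> x = u k \<bullet> q k" for x
      using W k uH[OF k] that unfolding i_def by auto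
    ultimately show ?thesis
      using min_on_hyperplane_imp_reflection[OF cb sc _ _ _ edge[OF k] _ P[of k]] uH[OF k]
      unfolding i_def by blast
  qed
  then obtain L where "\<And>k. k < m \<Longrightarrow> L k \<ge> 0 \<and> P ((k + m - 1) mod m) - P k = L k *\<^sub>R u k"
    by metis
  then show ?thesis using strong_traj_wrt_intro[where u = u and P = P and L = L, OF cb cp fs] uH P
    by blast
qed

theorem theorem1p1:
  fixes K T :: "'a::euclidean_space set" and q :: "nat \<Rightarrow> 'a" and m :: nat
    and H :: "nat \<Rightarrow> 'a set"
  assumes "convex_body K" and "convex_body T"
  shows "(strong_traj_wrt K T q m H \<longrightarrow> weak_traj_wrt K T q m H) \<and>
         (strictly_convex_set T \<longrightarrow> weak_traj_wrt K T q m H \<longrightarrow> strong_traj_wrt K T q m H)"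
  using strong_traj_imp_weak_traj[OF assms(2)] weak_traj_imp_strong_traj[OF assms] by blast

end
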